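(* Let $n\ge2$, $k\in\mathbb{Z}$, $\beta=(\beta_1,\dots,\beta_n)\in\mathbb{Z}^n$ and $1\le\ell\le n$. Then \[ q^{\beta_\ell+k}\Big[x^\beta(1-q^{-1/2}yx_\ell^{-1})\prod_{\substack{i=1\\ i\ne\ell}}^n\Big(1-z\frac{x_\ell}{x_i}\Big)\Big]h_k(z,q)=z^{n-1}\Big[x^\beta(1-q^{1/2}zyx_\ell^{-1})\prod_{\substack{i=1\\ i\ne\ell}}^n\Big(1-z^{-1}\frac{x_\ell}{x_i}\Big)\Big]h_k(z,q). \]
   Context: $q,z,y$ are indeterminates (with $|q|<1$, $|z|<1$); $(a;q)_\infty=\prod_{k\ge0}(1-aq^k)$. $x=x_1\cdots x_n$, $x^\beta=x_1^{\beta_1}\cdots x_n^{\beta_n}$, and \[ h_k(z,q):=x^{-k}\prod_{1\le i<j\le n}(x_i-x_j)\prod_{\substack{i,j=1\\ i\ne j}}^n\frac{(qx_ix_j^{-1};q)_\infty}{(zx_ix_j^{-1};q)_\infty}\prod_{i=1}^n\frac{(q^{1/2}x_iy;q)_\infty}{(q^{1/2}x_iyz;q)_\infty}, \] expanded as a formal power series in $z,q^{1/2}$ with coefficients Laurent polynomials in $x_1,\dots,x_n$ (polynomial in $y$). $[x^\alpha]F$ denotes the coefficient of $x^\alpha$ in $F$, extended linearly: for a Laurent polynomial $P=\sum_\alpha p_\alpha x^\alpha$ (coefficients depending on $y,z,q$), $[P]F:=\sum_\alpha p_\alpha[x^\alpha]F$. *)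

theory Defs
  imports "HOL-Library.Poly_Mapping"
begin

text \<open>Variables: X i is x_i (i = 1..n), Y is y, Z is z, T is q^(1/2).\<close>

datatype var = X nat | Y | Z | T

type_synonym mono = "var \<Rightarrow>\<^sub>0 int"
type_synonym lpoly = "mono \<Rightarrow>\<^sub>0 int"
type_synonym series = "mono \<Rightarrow> int"

definition mon :: "mono \<Rightarrow> lpoly" where
  "mon \<mu> = Poly_Mapping.single \<mu> 1"

definition vpow :: "var \<Rightarrow> int \<Rightarrow> lpoly" where
  "vpow v e = mon (Poly_Mapping.single v e)"

abbreviation xx :: "nat \<Rightarrow> lpoly" where "xx i \<equiv> vpow (X i) 1"
abbreviation xinv :: "nat \<Rightarrow> lpoly" where "xinv i \<equiv> vpow (X i) (-1)"
abbreviation yv :: lpoly where "yv \<equiv> vpow Y 1"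
abbreviation zv :: lpoly where "zv \<equiv> vpow Z 1"
abbreviation tv :: lpoly where "tv \<equiv> vpow T 1"
abbreviation qv :: lpoly where "qv \<equiv> vpow T 2"

text \<open>Truncated q-Pochhammer (a;q)_N and truncated expansion of 1/(a;q)_\<infinity>
  (each geometric series cut after N terms, first N factors).\<close>
definition poch_tr :: "nat \<Rightarrow> lpoly \<Rightarrow> lpoly" where
  "poch_tr N a = (\<Prod>k<N. 1 - a * qv ^ k)"

definition ipoch_tr :: "nat \<Rightarrow> lpoly \<Rightarrow> lpoly" where
  "ipoch_tr N a = (\<Prod>k<N. \<Sum>m<N. (a * qv ^ k) ^ m)"

definition h_tr :: "nat \<Rightarrow> int \<Rightarrow> nat \<Rightarrow> lpoly" where
  "h_tr n k N =
     (\<Prod>i\<in>{1..n}. vpow (X i) (-k))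
   * (\<Prod>(i,j)\<in>{(i,j). 1 \<le> i \<and> i < j \<and> j \<le> n}. xx i - xx j)
   * (\<Prod>(i,j)\<in>{(i,j). i \<in> {1..n} \<and> j \<in> {1..n} \<and> i \<noteq> j}.
        poch_tr N (qv * xx i * xinv j) * ipoch_tr N (zv * xx i * xinv j))
   * (\<Prod>i\<in>{1..n}. poch_tr N (tv * xx i * yv) * ipoch_tr N (tv * xx i * yv * zv))"

definition h :: "nat \<Rightarrow> int \<Rightarrow> series" where
  "h n k \<mu> = (THE c. eventually (\<lambda>N. Poly_Mapping.lookup (h_tr n k N) \<mu> = c) sequentially)"

definition is_xvar :: "var \<Rightarrow> bool" where
  "is_xvar v = (case v of X _ \<Rightarrow> True | _ \<Rightarrow> False)"

definition xpart :: "mono \<Rightarrow> mono" where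
  "xpart \<nu> = Poly_Mapping.mapp (\<lambda>v c. if is_xvar v then c else 0) \<nu>"

text \<open>[P]F = \<Sum>_\<alpha> p_\<alpha> [x^\<alpha>]F: a series in y,z,q^(1/2) (no x's).\<close>
definition bracket :: "lpoly \<Rightarrow> series \<Rightarrow> series" where
  "bracket P F \<mu> =
     (if (\<forall>i. Poly_Mapping.lookup \<mu> (X i) = 0)
      then (\<Sum>\<nu>\<in>Poly_Mapping.keys P. Poly_Mapping.lookup P \<nu> * F (\<mu> - (\<nu> - xpart \<nu>) + xpart \<nu>))
      else 0)"

definition lmul :: "lpoly \<Rightarrow> series \<Rightarrow> series" where
  "lmul p F \<mu> = (\<Sum>\<nu>\<in>Poly_Mapping.keys p. Poly_Mapping.lookup p \<nu> * F (\<mu> - \<nu>))"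

end

theory Submission
  imports Defs "HOL.Modules"
begin

text \<open>
  Since [x^\<alpha>]F is the constant term in x of x^-\<alpha> F, both sides are constant terms of h_k times a
  Laurent polynomial. A constant term in x_l does not change under the substitution x_l \<mapsto> q x_l,
  and h_k satisfies the q-difference equation
    h_k(x_l \<mapsto> q x_l) (1 - q^1/2 x_l y) \<Prod>_(i \<noteq> l) (1 - z x_i/(q x_l))
      = q^-k h_k (1 - q^1/2 x_l y z) \<Prod>_(i \<noteq> l) (z - x_i/x_l),
  which follows factor by factor from (c;q)_\<infinity> = (1 - c) (qc;q)_\<infinity>. Substituting in the left-hand
  side and then using the q-difference equation gives the right-hand side. Since h_k is defined
  through truncations, the q-difference equation is proved for them modulo terms of high weight.
\<close>


section \<open>Laurent polynomials and series\<close>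

lemma mult_one_minus_inverse:
  fixes x y a :: "'a::comm_ring_1"
  assumes "x * y = 1"
  shows "x * (1 - a * y) = x - a"
proof -
  have "x * (1 - a * y) = x - a * (x * y)"
    by (simp add: algebra_simps)
  then show ?thesis
    using assms by simp
qed

lemma vandermonde_pair_identity:
  fixes x y xl yl z :: "'a::comm_ring_1"
  assumes "x * y = 1" "xl * yl = 1"
  shows "x * ((1 - z * xl * y) * (1 - x * yl)) = (x - xl) * (z - x * yl)"
proof -
  have "x * ((1 - z * xl * y) * (1 - x * yl)) = (x - xl) * (z - x * yl)
     - x * (xl * yl - 1) - z * xl * (x * y - 1) + z * x * ((x * y) * (xl * yl) - 1)"
    by (simp add: algebra_simps)
  then show ?thesis
    using assms by simp
qed

lemma mon_mult: "mon a * mon b = mon (a + b)"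
  by (simp add: mon_def mult_single)

lemma vpow_mult: "vpow v a * vpow v b = vpow v (a + b)"
  by (simp add: vpow_def mon_mult single_add)

lemma vpow_zero [simp]: "vpow v 0 = 1"
  by (simp add: vpow_def mon_def)

lemma vpow_mult_neg: "vpow v e * vpow v (- e) = 1"
  by (simp add: vpow_mult)

lemma vpow_power: "vpow v e ^ m = vpow v (int m * e)"
  by (induction m) (simp_all add: vpow_mult algebra_simps)

lemma lpoly_induct [case_names zero one diff]:
  fixes c :: "'a \<Rightarrow>\<^sub>0 int"
  assumes "P 0" and "\<And>a. P (frag_of a)" and "\<And>a b. P a \<Longrightarrow> P b \<Longrightarrow> P (a - b)"
  shows "P c"
  using subset_UNIV by (rule frag_induction) (use assms in auto)


definition remap :: "(mono \<Rightarrow> mono) \<Rightarrow> lpoly \<Rightarrow> lpoly" where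
  "remap f P = frag_extend (\<lambda>\<nu>. frag_of (f \<nu>)) P"

lemma remap_zero [simp]: "remap f 0 = 0"
  by (simp add: remap_def)

lemma remap_frag_of [simp]: "remap f (frag_of a) = frag_of (f a)"
  by (simp add: remap_def)

lemma remap_add: "remap f (P + Q) = remap f P + remap f Q"
  by (simp add: remap_def frag_extend_add)

lemma remap_diff: "remap f (P - Q) = remap f P - remap f Q"
  by (simp add: remap_def frag_extend_diff)

lemma remap_mon: "remap f (mon a) = mon (f a)"
  by (simp add: mon_def)

lemma lookup_remap:
  assumes "\<And>\<nu>. g (f \<nu>) = \<nu>" and "\<And>\<nu>. f (g \<nu>) = \<nu>"
  shows "Poly_Mapping.lookup (remap f P) \<mu> = Poly_Mapping.lookup P (g \<mu>)"
  by (induction P rule: lpoly_induct) (use assms in \<open>auto simp: remap_diff lookup_minus\<close>)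

locale mono_additive = additive f for f :: "mono \<Rightarrow> mono"
begin

lemma remap_one: "remap f 1 = 1"
  using remap_mon[of f 0] by (simp add: mon_def zero)

lemma remap_mult: "remap f (P * Q) = remap f P * remap f Q"
proof -
  have remap_mult_frag_of: "remap f (frag_of a * Q) = frag_of (f a) * remap f Q" for a
    by (induction Q rule: lpoly_induct) (simp_all add: mult_single add right_diff_distrib remap_diff)
  show ?thesis
    by (induction P rule: lpoly_induct) (simp_all add: remap_mult_frag_of left_diff_distrib remap_diff)
qed

lemma remap_prod: "remap f (\<Prod>i\<in>I. g i) = (\<Prod>i\<in>I. remap f (g i))"
  by (induction I rule: infinite_finite_induct) (simp_all add: remap_one remap_mult)

lemma remap_power: "remap f (P ^ m) = remap f P ^ m"
  by (induction m) (simp_all add: remap_one remap_mult)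

lemma remap_sum: "remap f (\<Sum>i\<in>I. g i) = (\<Sum>i\<in>I. remap f (g i))"
  by (induction I rule: infinite_finite_induct) (simp_all add: remap_add)

end


lemma lmul_diff_left: "lmul (P - Q) F = lmul P F - lmul Q F"
proof
  fix \<mu>
  have sum_over: "lmul R F \<mu> = (\<Sum>\<nu>\<in>S. Poly_Mapping.lookup R \<nu> * F (\<mu> - \<nu>))"
    if "finite S" "Poly_Mapping.keys R \<subseteq> S" for R S
    unfolding lmul_def by (rule sum.mono_neutral_left) (use that in \<open>auto simp: in_keys_iff\<close>)
  let ?S = "Poly_Mapping.keys P \<union> Poly_Mapping.keys Q"
  have "lmul (P - Q) F \<mu> = (\<Sum>\<nu>\<in>?S. Poly_Mapping.lookup (P - Q) \<nu> * F (\<mu> - \<nu>))"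
    using keys_diff[of P Q] by (intro sum_over) auto
  also have "\<dots> = (\<Sum>\<nu>\<in>?S. Poly_Mapping.lookup P \<nu> * F (\<mu> - \<nu>))
                 - (\<Sum>\<nu>\<in>?S. Poly_Mapping.lookup Q \<nu> * F (\<mu> - \<nu>))"
    by (simp add: lookup_minus left_diff_distrib sum_subtractf)
  also have "\<dots> = lmul P F \<mu> - lmul Q F \<mu>"
    by (subst (1 2) sum_over[where S = ?S]) auto
  finally show "lmul (P - Q) F \<mu> = (lmul P F - lmul Q F) \<mu>" by simp
qed

lemma lmul_diff_right: "lmul P (F - G) = lmul P F - lmul P G"
  by (simp add: lmul_def fun_eq_iff right_diff_distrib sum_subtractf)

lemma lmul_frag_of: "lmul (frag_of a) F = (\<lambda>\<mu>. F (\<mu> - a))"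
  by (simp add: lmul_def fun_eq_iff)

lemma lmul_vpow: "lmul (vpow v e) F \<mu> = F (\<mu> - Poly_Mapping.single v e)"
  by (simp add: vpow_def mon_def lmul_frag_of)

lemma lmul_zero_left [simp]: "lmul 0 F = (\<lambda>_. 0)"
  by (simp add: lmul_def fun_eq_iff)

lemma lmul_mult: "lmul (P * Q) F = lmul P (lmul Q F)"
proof -
  have lmul_mult_frag_of: "lmul (frag_of a * R) F = lmul (frag_of a) (lmul R F)" for a R
  proof (induction R rule: lpoly_induct)
    case (one b)
    then show ?case by (simp add: mult_single lmul_frag_of algebra_simps)
  next
    case (diff b c)
    then show ?case by (metis right_diff_distrib lmul_diff_left lmul_diff_right)
  qed (simp add: lmul_frag_of)
  show ?thesis
  proof (induction P rule: lpoly_induct)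
    case zero
    show ?case by (simp add: fun_eq_iff)
  next
    case (one a)
    show ?case by (rule lmul_mult_frag_of)
  next
    case (diff b c)
    then show ?case by (simp add: left_diff_distrib lmul_diff_left)
  qed
qed

lemma lmul_lookup: "lmul P (Poly_Mapping.lookup Q) = Poly_Mapping.lookup (P * Q)"
proof -
  have lookup_frag_of_mult: "Poly_Mapping.lookup (frag_of a * R) \<mu> = Poly_Mapping.lookup R (\<mu> - a)"
    for a :: mono and R :: lpoly and \<mu>
  proof (induction R rule: lpoly_induct)
    case (diff b c)
    then show ?case by (simp add: right_diff_distrib lookup_minus)
  qed (auto simp: mult_single)
  show ?thesis
  proof (induction P rule: lpoly_induct)
    case zero
    show ?case by (simp add: fun_eq_iff)
  next
    case (one a)
    show ?case by (simp add: lmul_frag_of lookup_frag_of_mult fun_eq_iff)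
  next
    case (diff b c)
    then show ?case by (simp add: left_diff_distrib lmul_diff_left fun_eq_iff lookup_minus)
  qed
qed

lemma lmul_remap:
  assumes "\<And>\<nu>. g (f \<nu>) = \<nu>" and "\<And>\<nu>. f (g \<nu>) = \<nu>"
  shows "lmul (remap f P) F \<mu> = (\<Sum>\<nu>\<in>Poly_Mapping.keys P. Poly_Mapping.lookup P \<nu> * F (\<mu> - f \<nu>))"
proof -
  have "\<nu> \<in> Poly_Mapping.keys (remap f P) \<longleftrightarrow> g \<nu> \<in> Poly_Mapping.keys P" for \<nu>
    by (simp add: in_keys_iff lookup_remap[OF assms])
  then have "Poly_Mapping.keys (remap f P) = f ` Poly_Mapping.keys P"
    using assms by (auto simp: image_iff) metis
  moreover have "inj_on f (Poly_Mapping.keys P)"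
    by (metis assms(1) inj_onI)
  ultimately show ?thesis
    by (simp add: lmul_def sum.reindex lookup_remap[OF assms] assms)
qed


section \<open>The weight filtration\<close>

text \<open>z gets weight 3 so that z/q, which the shift x_l \<mapsto> q x_l produces from z x_i/x_l, still
  has positive weight.\<close>

definition wt :: "mono \<Rightarrow> int" where
  "wt \<nu> = Poly_Mapping.lookup \<nu> T + 3 * Poly_Mapping.lookup \<nu> Z"

definition wt_ge :: "int \<Rightarrow> lpoly \<Rightarrow> bool" where
  "wt_ge d P \<longleftrightarrow> (\<forall>\<nu>\<in>Poly_Mapping.keys P. d \<le> wt \<nu>)"

definition wt_cong :: "int \<Rightarrow> lpoly \<Rightarrow> lpoly \<Rightarrow> bool" where
  "wt_cong d P Q \<longleftrightarrow> wt_ge d (P - Q)"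

lemma wt_add: "wt (a + b) = wt a + wt b"
  by (simp add: wt_def lookup_add)

lemma wt_ge_zero [simp]: "wt_ge d 0"
  by (simp add: wt_ge_def)

lemma wt_ge_mon: "wt_ge d (mon m) \<longleftrightarrow> d \<le> wt m"
  by (simp add: wt_ge_def mon_def)

lemma wt_ge_one: "wt_ge 0 1"
  using wt_ge_mon[of 0 0] by (simp add: mon_def wt_def)

lemmas wt_ge_monomial_simps = vpow_def mon_mult wt_ge_mon wt_def lookup_add lookup_single

lemma wt_ge_mono: "wt_ge d P \<Longrightarrow> d' \<le> d \<Longrightarrow> wt_ge d' P"
  by (auto simp: wt_ge_def)

lemma wt_ge_add: "wt_ge d P \<Longrightarrow> wt_ge d Q \<Longrightarrow> wt_ge d (P + Q)"
  using keys_add[of P Q] by (auto simp: wt_ge_def)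

lemma wt_ge_minus: "wt_ge d P \<Longrightarrow> wt_ge d (- P)"
  by (simp add: wt_ge_def)

lemma wt_ge_diff: "wt_ge d P \<Longrightarrow> wt_ge d Q \<Longrightarrow> wt_ge d (P - Q)"
  using keys_diff[of P Q] by (auto simp: wt_ge_def)

lemma wt_ge_mult: "wt_ge a P \<Longrightarrow> wt_ge b Q \<Longrightarrow> wt_ge (a + b) (P * Q)"
  using keys_mult[of P Q] by (fastforce simp: wt_ge_def wt_add)

lemma wt_ge_mult_nonneg: "wt_ge 0 P \<Longrightarrow> wt_ge 0 Q \<Longrightarrow> wt_ge 0 (P * Q)"
  using wt_ge_mult[of 0 P 0 Q] by simp

lemma wt_ge_sum: "(\<And>i. i \<in> I \<Longrightarrow> wt_ge d (g i)) \<Longrightarrow> wt_ge d (\<Sum>i\<in>I. g i)"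
  by (induction I rule: infinite_finite_induct) (simp_all add: wt_ge_add)

lemma wt_ge_prod: "(\<And>i. i \<in> I \<Longrightarrow> wt_ge 0 (g i)) \<Longrightarrow> wt_ge 0 (\<Prod>i\<in>I. g i)"
  by (induction I rule: infinite_finite_induct) (simp_all add: wt_ge_one wt_ge_mult_nonneg)

lemma wt_ge_power: "wt_ge a P \<Longrightarrow> wt_ge (int m * a) (P ^ m)"
proof (induction m)
  case (Suc m)
  then show ?case
    using wt_ge_mult[of a P "int m * a" "P ^ m"] by (simp add: algebra_simps)
qed (simp add: wt_ge_one)

lemma wt_ge_vpow: "wt_ge d (vpow v e) \<longleftrightarrow> d \<le> (if v = T then e else if v = Z then 3 * e else 0)"
  by (cases v) (simp_all add: wt_ge_monomial_simps)

lemma wt_cong_refl [simp]: "wt_cong d P P"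
  by (simp add: wt_cong_def)

lemma wt_cong_sym: "wt_cong d P Q \<Longrightarrow> wt_cong d Q P"
  using wt_ge_minus[of d "P - Q"] by (simp add: wt_cong_def)

lemma wt_cong_trans: "wt_cong d P Q \<Longrightarrow> wt_cong d Q R \<Longrightarrow> wt_cong d P R"
  using wt_ge_add[of d "P - Q" "Q - R"] by (simp add: wt_cong_def)

lemma wt_cong_mono: "wt_cong d P Q \<Longrightarrow> d' \<le> d \<Longrightarrow> wt_cong d' P Q"
  by (auto simp: wt_cong_def intro: wt_ge_mono)

lemma wt_ge_cong: "wt_cong d P Q \<Longrightarrow> 0 \<le> d \<Longrightarrow> wt_ge 0 Q \<Longrightarrow> wt_ge 0 P"
  using wt_ge_add[of 0 Q "P - Q"] by (auto simp: wt_cong_def intro: wt_ge_mono)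

lemma wt_cong_mult:
  assumes "wt_cong d P Q" "wt_cong d R S" "0 \<le> d" "wt_ge 0 Q" "wt_ge 0 S"
  shows "wt_cong d (P * R) (Q * S)"
proof -
  have "wt_ge 0 R"
    using assms(2,3,5) by (rule wt_ge_cong)
  have "P * R - Q * S = (P - Q) * R + Q * (R - S)"
    by (simp add: algebra_simps)
  moreover have "wt_ge d ((P - Q) * R)" "wt_ge d (Q * (R - S))"
    using wt_ge_mult[of d "P - Q" 0 R] wt_ge_mult[of 0 Q d "R - S"] \<open>wt_ge 0 R\<close> assms
    by (simp_all add: wt_cong_def)
  ultimately show ?thesis
    by (simp add: wt_cong_def wt_ge_add)
qed

lemma wt_cong_mult_left: "wt_ge a K \<Longrightarrow> wt_cong d P Q \<Longrightarrow> wt_cong (a + d) (K * P) (K * Q)"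
  using wt_ge_mult[of a K d "P - Q"] by (simp add: wt_cong_def right_diff_distrib)

lemma wt_cong_prod:
  assumes "finite I" "0 \<le> d"
    and "\<And>i. i \<in> I \<Longrightarrow> wt_cong d (f i) (g i)" "\<And>i. i \<in> I \<Longrightarrow> wt_ge 0 (g i)"
  shows "wt_cong d (\<Prod>i\<in>I. f i) (\<Prod>i\<in>I. g i)"
  using assms(1,3,4)
  by (induction I rule: finite_induct) (simp_all add: wt_cong_mult wt_ge_prod assms(2))

lemma wt_cong_lookup:
  assumes "wt_cong d P Q" "wt \<mu> < d"
  shows "Poly_Mapping.lookup P \<mu> = Poly_Mapping.lookup Q \<mu>"
proof (rule ccontr)
  assume "Poly_Mapping.lookup P \<mu> \<noteq> Poly_Mapping.lookup Q \<mu>"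
  then have "\<mu> \<in> Poly_Mapping.keys (P - Q)"
    by (simp add: in_keys_iff lookup_minus)
  with assms show False
    by (auto simp: wt_cong_def wt_ge_def)
qed


section \<open>Truncated q-Pochhammer symbols\<close>

definition geom_tr :: "nat \<Rightarrow> lpoly \<Rightarrow> lpoly" where
  "geom_tr N c = (\<Sum>m<N. c ^ m)"

lemma ipoch_tr_geom_tr: "ipoch_tr N a = (\<Prod>k<N. geom_tr N (a * qv ^ k))"
  by (simp add: ipoch_tr_def geom_tr_def)

lemma wt_ge_qv_power: "wt_ge (2 * int k) (qv ^ k)"
  using wt_ge_power[of 2 qv k] by (simp add: wt_ge_vpow mult.commute)

lemma wt_ge_qv_mult: "wt_ge 0 c \<Longrightarrow> wt_ge 0 (qv * c)"
  using wt_ge_mult[of 2 qv 0 c] by (auto simp: wt_ge_vpow intro: wt_ge_mono)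

lemma wt_ge_mult_qv_power:
  assumes "wt_ge 0 c"
  shows "wt_ge 0 (c * qv ^ k)"
proof -
  have "wt_ge (0 + 2 * int k) (c * qv ^ k)"
    by (rule wt_ge_mult[OF assms wt_ge_qv_power])
  then show ?thesis
    by (rule wt_ge_mono) simp
qed

lemma wt_ge_poch_tr: "wt_ge 0 c \<Longrightarrow> wt_ge 0 (poch_tr N c)"
  unfolding poch_tr_def by (intro wt_ge_prod wt_ge_diff wt_ge_one wt_ge_mult_qv_power)

lemma wt_ge_geom_tr: "wt_ge 0 c \<Longrightarrow> wt_ge 0 (geom_tr N c)"
  unfolding geom_tr_def using wt_ge_power[of 0 c] by (intro wt_ge_sum) auto

lemma wt_ge_ipoch_tr: "wt_ge 0 c \<Longrightarrow> wt_ge 0 (ipoch_tr N c)"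
  unfolding ipoch_tr_geom_tr by (intro wt_ge_prod wt_ge_geom_tr wt_ge_mult_qv_power)

text \<open>Truncated forms of (c;q)_\<infinity> = (1 - c) (qc;q)_\<infinity>.\<close>

lemma poch_tr_shift: "poch_tr N c * (1 - qv ^ N * c) = (1 - c) * poch_tr N (qv * c)"
proof (induction N)
  case (Suc N)
  have "poch_tr (Suc N) c * (1 - qv ^ Suc N * c)
      = (poch_tr N c * (1 - qv ^ N * c)) * (1 - qv ^ Suc N * c)"
    by (simp add: poch_tr_def mult.commute)
  also have "\<dots> = (1 - c) * (poch_tr N (qv * c) * (1 - qv * c * qv ^ N))"
    by (simp only: Suc) (simp add: algebra_simps)
  also have "\<dots> = (1 - c) * poch_tr (Suc N) (qv * c)"
    by (simp add: poch_tr_def)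
  finally show ?case .
qed (simp add: poch_tr_def)

lemma ipoch_tr_shift: "ipoch_tr N c * geom_tr N (qv ^ N * c) = geom_tr N c * ipoch_tr N (qv * c)"
proof -
  have "ipoch_tr N c * geom_tr N (qv ^ N * c) = (\<Prod>k<Suc N. geom_tr N (c * qv ^ k))"
    by (simp add: ipoch_tr_geom_tr mult.commute)
  also have "\<dots> = geom_tr N c * (\<Prod>k<N. geom_tr N (c * qv ^ Suc k))"
    by (subst prod.lessThan_Suc_shift) simp
  also have "\<dots> = geom_tr N c * ipoch_tr N (qv * c)"
    by (simp add: ipoch_tr_geom_tr algebra_simps)
  finally show ?thesis .
qed

lemma geom_tr_cong_one:
  assumes "wt_ge a c" "0 \<le> a" "1 \<le> N"
  shows "wt_cong a (geom_tr N c) 1"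
proof -
  have "geom_tr N c = (\<Sum>m<Suc (N - 1). c ^ m)"
    using assms by (simp add: geom_tr_def)
  then have "geom_tr N c - 1 = (\<Sum>m<N - 1. c ^ Suc m)"
    by (simp add: sum.lessThan_Suc_shift del: sum.lessThan_Suc power_Suc)
  moreover have "wt_ge a (c ^ Suc m)" for m
  proof (rule wt_ge_mono[OF wt_ge_power[OF assms(1), of "Suc m"]])
    have "0 \<le> int m * a"
      using assms(2) by simp
    then show "a \<le> int (Suc m) * a"
      by (simp add: algebra_simps)
  qed
  ultimately show ?thesis
    by (simp add: wt_cong_def wt_ge_sum)
qed

lemma poch_tr_shift_cong:
  assumes "wt_ge 0 c"
  shows "wt_cong (2 * int N) ((1 - c) * poch_tr N (qv * c)) (poch_tr N c)"
proof -
  have "wt_ge (0 + (2 * int N + 0)) (poch_tr N c * (qv ^ N * c))"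
    by (intro wt_ge_mult wt_ge_poch_tr wt_ge_qv_power assms)
  then show ?thesis
    using poch_tr_shift[of N c] wt_ge_minus
    by (simp add: wt_cong_def algebra_simps)
qed

lemma ipoch_tr_shift_cong:
  assumes "wt_ge 1 c" "1 \<le> N"
  shows "wt_cong (int N) (ipoch_tr N (qv * c)) ((1 - c) * ipoch_tr N c)"
proof -
  have c0: "wt_ge 0 c"
    using assms(1) by (rule wt_ge_mono) simp
  have "(1 - c) * ipoch_tr N c * geom_tr N (qv ^ N * c) = ((1 - c) * geom_tr N c) * ipoch_tr N (qv * c)"
    by (simp only: mult.assoc ipoch_tr_shift)
  also have "\<dots> = (1 - c ^ N) * ipoch_tr N (qv * c)"
    by (simp add: geom_tr_def one_diff_power_eq)
  finally have shift: "(1 - c) * ipoch_tr N c * geom_tr N (qv ^ N * c) = (1 - c ^ N) * ipoch_tr N (qv * c)" .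
  have "wt_ge (int N * 1 + 0) (c ^ N * ipoch_tr N (qv * c))"
    by (intro wt_ge_mult wt_ge_power wt_ge_ipoch_tr wt_ge_qv_mult assms(1) c0)
  then have "wt_cong (int N) (ipoch_tr N (qv * c)) ((1 - c ^ N) * ipoch_tr N (qv * c))"
    by (simp add: wt_cong_def algebra_simps)
  moreover have "wt_cong (int N) ((1 - c) * ipoch_tr N c * geom_tr N (qv ^ N * c)) ((1 - c) * ipoch_tr N c * 1)"
  proof (rule wt_cong_mult)
    have "wt_ge (2 * int N + 1) (qv ^ N * c)"
      by (rule wt_ge_mult[OF wt_ge_qv_power assms(1)])
    then show "wt_cong (int N) (geom_tr N (qv ^ N * c)) 1"
      by (intro wt_cong_mono[OF geom_tr_cong_one]) (use assms in auto)
    show "wt_ge 0 ((1 - c) * ipoch_tr N c)"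
      by (intro wt_ge_mult_nonneg wt_ge_diff wt_ge_one wt_ge_ipoch_tr c0)
  qed (simp_all add: wt_ge_one)
  ultimately show ?thesis
    using shift wt_cong_trans by (simp only: mult_1_right)
qed

lemma poch_ratio_shift_cong:
  assumes "wt_ge 0 c" "wt_ge 1 e" "1 \<le> N"
  shows "wt_cong (int N) ((1 - c) * poch_tr N (qv * c) * ipoch_tr N (qv * e))
                         ((1 - e) * poch_tr N c * ipoch_tr N e)"
proof -
  have e0: "wt_ge 0 e"
    using assms(2) by (rule wt_ge_mono) simp
  have "wt_cong (int N) ((1 - c) * poch_tr N (qv * c) * ipoch_tr N (qv * e))
                        (poch_tr N c * ((1 - e) * ipoch_tr N e))"
    by (rule wt_cong_mult[OF wt_cong_mono[OF poch_tr_shift_cong[OF assms(1)]]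
          ipoch_tr_shift_cong[OF assms(2,3)]])
       (auto intro!: wt_ge_mult_nonneg wt_ge_diff wt_ge_one wt_ge_poch_tr wt_ge_ipoch_tr assms(1) e0)
  then show ?thesis
    by (simp add: ac_simps)
qed

lemma poch_tr_stable:
  assumes "wt_ge 0 c" "N \<le> M"
  shows "wt_cong (2 * int N) (poch_tr M c) (poch_tr N c)"
proof -
  have "poch_tr M c = poch_tr N c * (\<Prod>k\<in>{N..<M}. 1 - c * qv ^ k)"
    unfolding poch_tr_def using assms(2)
    by (simp add: atLeast0LessThan[symmetric] prod.atLeastLessThan_concat)
  moreover have "wt_cong (2 * int N) (poch_tr N c * (\<Prod>k\<in>{N..<M}. 1 - c * qv ^ k))
                                     (poch_tr N c * (\<Prod>k\<in>{N..<M}. 1))"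
  proof (intro wt_cong_mult wt_cong_prod)
    fix k assume k: "k \<in> {N..<M}"
    have "wt_ge (0 + 2 * int k) (c * qv ^ k)"
      by (rule wt_ge_mult[OF assms(1) wt_ge_qv_power])
    then have "wt_ge (2 * int N) (c * qv ^ k)"
      by (rule wt_ge_mono) (use k in auto)
    then show "wt_cong (2 * int N) (1 - c * qv ^ k) 1"
      by (simp add: wt_cong_def wt_ge_minus)
  qed (simp_all add: wt_ge_one wt_ge_poch_tr wt_ge_prod wt_ge_diff wt_ge_mult_qv_power assms(1))
  ultimately show ?thesis
    by simp
qed

lemma geom_tr_stable:
  assumes "wt_ge 1 c" "N \<le> M"
  shows "wt_cong (int N) (geom_tr M c) (geom_tr N c)"
proof -
  have "geom_tr M c = geom_tr N c + (\<Sum>m\<in>{N..<M}. c ^ m)"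
    unfolding geom_tr_def using assms(2)
    by (simp add: atLeast0LessThan[symmetric] sum.atLeastLessThan_concat)
  moreover have "wt_ge (int N) (\<Sum>m\<in>{N..<M}. c ^ m)"
  proof (rule wt_ge_sum)
    fix m
    assume "m \<in> {N..<M}"
    then show "wt_ge (int N) (c ^ m)"
      using wt_ge_power[OF assms(1), of m] by (auto elim: wt_ge_mono)
  qed
  ultimately show ?thesis
    by (simp add: wt_cong_def)
qed

lemma ipoch_tr_stable:
  assumes "wt_ge 1 c" "N \<le> M"
  shows "wt_cong (int N) (ipoch_tr M c) (ipoch_tr N c)"
proof -
  have wt_ck: "wt_ge (1 + 2 * int k) (c * qv ^ k)" for k
    by (rule wt_ge_mult[OF assms(1) wt_ge_qv_power])
  have "ipoch_tr N c = (\<Prod>k<M. if k < N then geom_tr N (c * qv ^ k) else 1)"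
    unfolding ipoch_tr_geom_tr using assms(2)
    by (intro prod.mono_neutral_cong_left) auto
  moreover have "wt_cong (int N) (\<Prod>k<M. geom_tr M (c * qv ^ k))
                                 (\<Prod>k<M. if k < N then geom_tr N (c * qv ^ k) else 1)"
  proof (rule wt_cong_prod)
    fix k
    assume "k \<in> {..<M}"
    have "wt_ge 0 (c * qv ^ k)" "wt_ge 1 (c * qv ^ k)"
      using wt_ck[of k] by (auto elim: wt_ge_mono)
    then show "wt_ge 0 (if k < N then geom_tr N (c * qv ^ k) else 1)"
      using wt_ge_geom_tr wt_ge_one by auto
    show "wt_cong (int N) (geom_tr M (c * qv ^ k)) (if k < N then geom_tr N (c * qv ^ k) else 1)"
    proof (cases "k < N")
      case True
      then show ?thesis
        using geom_tr_stable[OF \<open>wt_ge 1 (c * qv ^ k)\<close> assms(2)] by simp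
    next
      case False
      with \<open>k \<in> {..<M}\<close> have "wt_cong (1 + 2 * int k) (geom_tr M (c * qv ^ k)) 1"
        by (intro geom_tr_cong_one[OF wt_ck]) auto
      with False show ?thesis
        by simp (erule wt_cong_mono, simp)
    qed
  qed simp_all
  ultimately show ?thesis
    by (simp add: ipoch_tr_geom_tr)
qed


section \<open>h as the limit of its truncations\<close>

definition pair_factor :: "nat \<Rightarrow> nat \<times> nat \<Rightarrow> lpoly" where
  "pair_factor N p = poch_tr N (qv * xx (fst p) * xinv (snd p)) * ipoch_tr N (zv * xx (fst p) * xinv (snd p))"

definition y_factor :: "nat \<Rightarrow> nat \<Rightarrow> lpoly" where
  "y_factor N i = poch_tr N (tv * xx i * yv) * ipoch_tr N (tv * xx i * yv * zv)"

abbreviation off_diagonal :: "nat \<Rightarrow> (nat \<times> nat) set" where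
  "off_diagonal n \<equiv> {(i, j). i \<in> {1..n} \<and> j \<in> {1..n} \<and> i \<noteq> j}"

abbreviation increasing_pairs :: "nat \<Rightarrow> (nat \<times> nat) set" where
  "increasing_pairs n \<equiv> {(i, j). 1 \<le> i \<and> i < j \<and> j \<le> n}"

abbreviation x_monomial :: "nat \<Rightarrow> (nat \<Rightarrow> int) \<Rightarrow> lpoly" where
  "x_monomial n e \<equiv> \<Prod>i\<in>{1..n}. vpow (X i) (e i)"

abbreviation vandermonde :: "nat \<Rightarrow> lpoly" where
  "vandermonde n \<equiv> \<Prod>p\<in>increasing_pairs n. xx (fst p) - xx (snd p)"

lemma finite_off_diagonal: "finite (off_diagonal n)"
  by (rule finite_subset[of _ "{1..n} \<times> {1..n}"]) auto

lemma finite_increasing_pairs: "finite (increasing_pairs n)"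
  by (rule finite_subset[of _ "{1..n} \<times> {1..n}"]) auto

lemma h_tr_factors:
  "h_tr n k N = x_monomial n (\<lambda>_. - k) * vandermonde n
     * (\<Prod>p\<in>off_diagonal n. pair_factor N p) * (\<Prod>i\<in>{1..n}. y_factor N i)"
  by (simp add: h_tr_def pair_factor_def y_factor_def case_prod_beta)

lemma wt_ge_pair_factor: "wt_ge 0 (pair_factor N p)"
  unfolding pair_factor_def
  by (intro wt_ge_mult_nonneg wt_ge_poch_tr wt_ge_ipoch_tr) (simp_all add: wt_ge_monomial_simps)

lemma wt_ge_y_factor: "wt_ge 0 (y_factor N i)"
  unfolding y_factor_def
  by (intro wt_ge_mult_nonneg wt_ge_poch_tr wt_ge_ipoch_tr) (simp_all add: wt_ge_monomial_simps)

lemma wt_ge_x_monomial: "wt_ge 0 (x_monomial n e)"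
  by (intro wt_ge_prod) (simp add: wt_ge_vpow)

lemma wt_ge_vandermonde: "wt_ge 0 (vandermonde n)"
  by (intro wt_ge_prod wt_ge_diff) (simp_all add: wt_ge_vpow)

lemma pair_factor_stable: "N \<le> M \<Longrightarrow> wt_cong (int N) (pair_factor M p) (pair_factor N p)"
  unfolding pair_factor_def
  by (intro wt_cong_mult wt_cong_mono[OF poch_tr_stable] ipoch_tr_stable wt_ge_poch_tr wt_ge_ipoch_tr)
     (simp_all add: wt_ge_monomial_simps)

lemma y_factor_stable: "N \<le> M \<Longrightarrow> wt_cong (int N) (y_factor M i) (y_factor N i)"
  unfolding y_factor_def
  by (intro wt_cong_mult wt_cong_mono[OF poch_tr_stable] ipoch_tr_stable wt_ge_poch_tr wt_ge_ipoch_tr)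
     (simp_all add: wt_ge_monomial_simps)

lemma h_tr_stable:
  assumes "N \<le> M"
  shows "wt_cong (int N) (h_tr n k M) (h_tr n k N)"
proof -
  let ?C = "x_monomial n (\<lambda>_. - k) * vandermonde n"
  have wt_C: "wt_ge 0 ?C"
    by (intro wt_ge_mult_nonneg wt_ge_x_monomial wt_ge_vandermonde)
  have "wt_cong (int N) (\<Prod>p\<in>off_diagonal n. pair_factor M p) (\<Prod>p\<in>off_diagonal n. pair_factor N p)"
    by (intro wt_cong_prod finite_off_diagonal pair_factor_stable wt_ge_pair_factor assms) simp
  then have pairs: "wt_cong (int N) (?C * (\<Prod>p\<in>off_diagonal n. pair_factor M p))
                                    (?C * (\<Prod>p\<in>off_diagonal n. pair_factor N p))"
    using wt_cong_mult_left[OF wt_C] by fastforce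
  have ys: "wt_cong (int N) (\<Prod>i\<in>{1..n}. y_factor M i) (\<Prod>i\<in>{1..n}. y_factor N i)"
    by (intro wt_cong_prod y_factor_stable wt_ge_y_factor assms) simp_all
  have "wt_ge 0 (?C * (\<Prod>p\<in>off_diagonal n. pair_factor N p))"
    by (intro wt_ge_mult_nonneg wt_C wt_ge_prod wt_ge_pair_factor)
  then show ?thesis
    unfolding h_tr_factors
    by (intro wt_cong_mult[OF pairs ys]) (simp_all add: wt_ge_prod wt_ge_y_factor)
qed

lemma h_eq_h_tr:
  assumes "wt \<nu> < int N"
  shows "h n k \<nu> = Poly_Mapping.lookup (h_tr n k N) \<nu>"
proof -
  let ?c = "Poly_Mapping.lookup (h_tr n k N) \<nu>"
  have stable: "eventually (\<lambda>M. Poly_Mapping.lookup (h_tr n k M) \<nu> = ?c) sequentially"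
    unfolding eventually_sequentially
    using wt_cong_lookup[OF h_tr_stable assms] by blast
  show ?thesis
    unfolding h_def
  proof (rule the_equality)
    show "eventually (\<lambda>M. Poly_Mapping.lookup (h_tr n k M) \<nu> = ?c) sequentially"
      by (rule stable)
  next
    fix c
    assume "eventually (\<lambda>M. Poly_Mapping.lookup (h_tr n k M) \<nu> = c) sequentially"
    with stable have "eventually (\<lambda>M. c = ?c) sequentially"
      by eventually_elim simp
    then show "c = ?c"
      by simp
  qed
qed

lemma eventually_h_eq_h_tr:
  assumes "finite A"
  shows "eventually (\<lambda>N. \<forall>\<nu>\<in>A. h n k \<nu> = Poly_Mapping.lookup (h_tr n k N) \<nu>) sequentially"
proof (rule eventually_ball_finite[OF assms], rule ballI)
  fix \<nu>
  show "eventually (\<lambda>N. h n k \<nu> = Poly_Mapping.lookup (h_tr n k N) \<nu>) sequentially"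
    using eventually_ge_at_top[of "nat (wt \<nu>) + 1"]
    by eventually_elim (simp add: h_eq_h_tr)
qed


section \<open>The q-difference equation of h\<close>

text \<open>\<open>remap (qshift l)\<close> substitutes q x_l for x_l (recall that T stands for q^1/2).\<close>

definition qshift :: "nat \<Rightarrow> mono \<Rightarrow> mono" where
  "qshift l \<nu> = \<nu> + Poly_Mapping.single T (2 * Poly_Mapping.lookup \<nu> (X l))"

definition qshift_inv :: "nat \<Rightarrow> mono \<Rightarrow> mono" where
  "qshift_inv l \<nu> = \<nu> - Poly_Mapping.single T (2 * Poly_Mapping.lookup \<nu> (X l))"

interpretation qshift: mono_additive "qshift l"
  by standard (simp add: qshift_def lookup_add single_add algebra_simps)

lemma qshift_inv_qshift [simp]: "qshift_inv l (qshift l \<nu>) = \<nu>"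
  by (simp add: qshift_def qshift_inv_def lookup_add lookup_single)

lemma qshift_qshift_inv [simp]: "qshift l (qshift_inv l \<nu>) = \<nu>"
  by (simp add: qshift_def qshift_inv_def lookup_minus lookup_single)

lemma qshift_inv_diff: "qshift_inv l (a - b) = qshift_inv l a - qshift_inv l b"
  by (simp add: qshift_inv_def lookup_minus single_diff algebra_simps)

lemma remap_qshift_vpow:
  "remap (qshift l) (vpow v e) = (if v = X l then vpow (X l) e * vpow T (2 * e) else vpow v e)"
  by (cases v) (auto simp: vpow_def remap_mon qshift_def mon_mult lookup_single)

lemma remap_qshift_poch_tr: "remap (qshift l) (poch_tr N c) = poch_tr N (remap (qshift l) c)"
  by (simp add: poch_tr_def qshift.remap_prod qshift.remap_mult remap_diff qshift.remap_one
      qshift.remap_power remap_qshift_vpow)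

lemma remap_qshift_ipoch_tr: "remap (qshift l) (ipoch_tr N c) = ipoch_tr N (remap (qshift l) c)"
  by (simp add: ipoch_tr_def qshift.remap_prod qshift.remap_mult qshift.remap_sum
      qshift.remap_power remap_qshift_vpow)

lemma remap_qshift_x_monomial:
  assumes "l \<in> {1..n}"
  shows "remap (qshift l) (x_monomial n e) = x_monomial n e * vpow T (2 * e l)"
proof -
  have "remap (qshift l) (x_monomial n e)
      = (\<Prod>i\<in>{1..n}. vpow (X i) (e i) * (if i = l then vpow T (2 * e l) else 1))"
    unfolding qshift.remap_prod by (rule prod.cong) (auto simp: remap_qshift_vpow)
  then show ?thesis
    using assms by (simp add: prod.distrib)
qed

text \<open>The coefficient of a monomial free of x_l is unchanged when x_l \<mapsto> q x_l is applied to both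
  factors; \<open>\<lambda>\<nu>. F (qshift_inv l \<nu>)\<close> is the substituted series.\<close>

lemma lmul_qshift:
  assumes "Poly_Mapping.lookup \<mu> (X l) = 0"
  shows "lmul G F \<mu> = lmul (remap (qshift l) G) (\<lambda>\<nu>. F (qshift_inv l \<nu>)) \<mu>"
proof -
  have "qshift_inv l \<mu> = \<mu>"
    using assms by (simp add: qshift_inv_def)
  moreover have "lmul (remap (qshift l) G) (\<lambda>\<nu>. F (qshift_inv l \<nu>)) \<mu>
      = (\<Sum>\<nu>\<in>Poly_Mapping.keys G. Poly_Mapping.lookup G \<nu> * F (qshift_inv l (\<mu> - qshift l \<nu>)))"
    by (rule lmul_remap[where g = "qshift_inv l"]) simp_all
  ultimately show ?thesis
    by (simp add: lmul_def qshift_inv_diff)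
qed

definition incident_factor ::
    "nat \<Rightarrow> (nat \<Rightarrow> lpoly) \<Rightarrow> (nat \<Rightarrow> lpoly) \<Rightarrow> nat \<times> nat \<Rightarrow> lpoly" where
  "incident_factor l f g p = (if fst p = l then f (snd p) else if snd p = l then g (fst p) else 1)"

lemma wt_ge_incident_factor:
  "(\<And>j. wt_ge 0 (f j)) \<Longrightarrow> (\<And>i. wt_ge 0 (g i)) \<Longrightarrow> wt_ge 0 (incident_factor l f g p)"
  by (simp add: incident_factor_def wt_ge_one)

lemma prod_incident_factor:
  assumes "finite S" "(l, l) \<notin> S"
  shows "(\<Prod>p\<in>S. incident_factor l f g p)
       = (\<Prod>j\<in>{j. (l, j) \<in> S}. f j) * (\<Prod>i\<in>{i. (i, l) \<in> S}. g i)"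
proof -
  have "(\<Prod>p\<in>S. incident_factor l f g p)
      = (\<Prod>p\<in>S. (if fst p = l then f (snd p) else 1) * (if snd p = l then g (fst p) else 1))"
    using assms(2) by (intro prod.cong) (auto simp: incident_factor_def)
  also have "\<dots> = (\<Prod>p\<in>{p\<in>S. fst p = l}. f (snd p)) * (\<Prod>p\<in>{p\<in>S. snd p = l}. g (fst p))"
    by (simp add: prod.distrib prod.inter_filter assms(1))
  also have "{p\<in>S. fst p = l} = Pair l ` {j. (l, j) \<in> S}"
    by force
  also have "{p\<in>S. snd p = l} = (\<lambda>i. (i, l)) ` {i. (i, l) \<in> S}"
    by force
  finally show ?thesis
    by (simp add: prod.reindex inj_on_def)
qed

lemma prod_off_diagonal_incident_factor:
  assumes "l \<in> {1..n}"
  shows "(\<Prod>p\<in>off_diagonal n. incident_factor l f g p)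
       = (\<Prod>j\<in>{1..n} - {l}. f j) * (\<Prod>i\<in>{1..n} - {l}. g i)"
proof -
  have "(\<Prod>p\<in>off_diagonal n. incident_factor l f g p)
      = (\<Prod>j\<in>{j. (l, j) \<in> off_diagonal n}. f j) * (\<Prod>i\<in>{i. (i, l) \<in> off_diagonal n}. g i)"
    by (rule prod_incident_factor[OF finite_off_diagonal]) simp
  also have "{j. (l, j) \<in> off_diagonal n} = {1..n} - {l}"
    using assms by auto
  also have "{i. (i, l) \<in> off_diagonal n} = {1..n} - {l}"
    using assms by auto
  finally show ?thesis .
qed

lemma prod_increasing_pairs_incident_factor:
  assumes "l \<in> {1..n}"
  shows "(\<Prod>p\<in>increasing_pairs n. incident_factor l f f p) = (\<Prod>j\<in>{1..n} - {l}. f j)"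
proof -
  have "(\<Prod>p\<in>increasing_pairs n. incident_factor l f f p)
      = (\<Prod>j\<in>{j. (l, j) \<in> increasing_pairs n}. f j) * (\<Prod>i\<in>{i. (i, l) \<in> increasing_pairs n}. f i)"
    by (rule prod_incident_factor[OF finite_increasing_pairs]) simp
  also have "{j. (l, j) \<in> increasing_pairs n} = {l<..n}"
    using assms by auto
  also have "{i. (i, l) \<in> increasing_pairs n} = {1..<l}"
    using assms by auto
  also have "(\<Prod>j\<in>{l<..n}. f j) * (\<Prod>i\<in>{1..<l}. f i) = (\<Prod>j\<in>{1..<l} \<union> {l<..n}. f j)"
    by (subst prod.union_disjoint) (auto simp: mult.commute)
  also have "{1..<l} \<union> {l<..n} = {1..n} - {l}"
    using assms by auto
  finally show ?thesis .
qed

abbreviation qinv :: lpoly where "qinv \<equiv> vpow T (-2)"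

lemma pair_factor_qshift_cong_left:
  assumes "1 \<le> N" "j \<noteq> l"
  shows "wt_cong (int N) (remap (qshift l) (pair_factor N (l, j)) * (1 - qv * xx l * xinv j))
                         (pair_factor N (l, j) * (1 - zv * xx l * xinv j))"
proof -
  define a where "a = qv * xx l * xinv j"
  define b where "b = zv * xx l * xinv j"
  have "remap (qshift l) a = qv * a" "remap (qshift l) b = qv * b"
    using assms(2) by (simp_all add: a_def b_def qshift.remap_mult remap_qshift_vpow ac_simps)
  moreover have F: "pair_factor N (l, j) = poch_tr N a * ipoch_tr N b"
    by (simp add: pair_factor_def a_def b_def)
  ultimately have shifted: "remap (qshift l) (pair_factor N (l, j)) = poch_tr N (qv * a) * ipoch_tr N (qv * b)"
    by (simp add: qshift.remap_mult remap_qshift_poch_tr remap_qshift_ipoch_tr)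
  have "wt_cong (int N) ((1 - a) * poch_tr N (qv * a) * ipoch_tr N (qv * b))
                        ((1 - b) * poch_tr N a * ipoch_tr N b)"
    by (rule poch_ratio_shift_cong[OF _ _ assms(1)]) (simp_all add: a_def b_def wt_ge_monomial_simps)
  then show ?thesis
    unfolding shifted unfolding F by (simp add: a_def b_def ac_simps)
qed

lemma pair_factor_qshift_cong_right:
  assumes "1 \<le> N" "i \<noteq> l"
  shows "wt_cong (int N) (remap (qshift l) (pair_factor N (i, l)) * (1 - zv * xx i * xinv l * qinv))
                         (pair_factor N (i, l) * (1 - xx i * xinv l))"
proof -
  define c where "c = xx i * xinv l"
  define e where "e = zv * xx i * xinv l * qinv"
  have q_qinv: "qv * qinv = 1"
    using vpow_mult_neg[of T 2] by simp
  have "qv * e = zv * xx i * xinv l * (qv * qinv)"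
    by (simp add: e_def ac_simps)
  then have qe: "zv * xx i * xinv l = qv * e"
    by (simp add: q_qinv)
  have F: "pair_factor N (i, l) = poch_tr N (qv * c) * ipoch_tr N (qv * e)"
    unfolding pair_factor_def fst_conv snd_conv qe by (simp add: c_def mult.assoc)
  have "remap (qshift l) (qv * c) = xx i * xinv l * (qv * qinv)"
    using assms(2) by (simp add: c_def qshift.remap_mult remap_qshift_vpow ac_simps)
  moreover have "remap (qshift l) (zv * xx i * xinv l) = e"
    using assms(2) by (simp add: e_def qshift.remap_mult remap_qshift_vpow ac_simps)
  ultimately have "remap (qshift l) (qv * c) = c" "remap (qshift l) (qv * e) = e"
    by (simp_all add: q_qinv c_def flip: qe)
  then have shifted: "remap (qshift l) (pair_factor N (i, l)) = poch_tr N c * ipoch_tr N e"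
    by (simp add: F qshift.remap_mult remap_qshift_poch_tr remap_qshift_ipoch_tr)
  have "wt_cong (int N) ((1 - e) * poch_tr N c * ipoch_tr N e)
                        ((1 - c) * poch_tr N (qv * c) * ipoch_tr N (qv * e))"
    by (rule wt_cong_sym, rule poch_ratio_shift_cong[OF _ _ assms(1)])
       (simp_all add: c_def e_def wt_ge_monomial_simps)
  then show ?thesis
    unfolding shifted unfolding F by (simp add: c_def e_def ac_simps)
qed

lemma remap_qshift_pair_factor:
  "i \<noteq> l \<Longrightarrow> j \<noteq> l \<Longrightarrow> remap (qshift l) (pair_factor N (i, j)) = pair_factor N (i, j)"
  by (simp add: pair_factor_def qshift.remap_mult remap_qshift_poch_tr remap_qshift_ipoch_tr
      remap_qshift_vpow)

lemma y_factor_qshift_cong: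
  assumes "1 \<le> N"
  shows "wt_cong (int N) (remap (qshift l) (y_factor N l) * (1 - tv * xx l * yv))
                         (y_factor N l * (1 - tv * xx l * yv * zv))"
proof -
  define c where "c = tv * xx l * yv"
  define d where "d = tv * xx l * yv * zv"
  have "remap (qshift l) c = qv * c" "remap (qshift l) d = qv * d"
    by (simp_all add: c_def d_def qshift.remap_mult remap_qshift_vpow ac_simps)
  moreover have F: "y_factor N l = poch_tr N c * ipoch_tr N d"
    by (simp add: y_factor_def c_def d_def)
  ultimately have shifted: "remap (qshift l) (y_factor N l) = poch_tr N (qv * c) * ipoch_tr N (qv * d)"
    by (simp add: qshift.remap_mult remap_qshift_poch_tr remap_qshift_ipoch_tr)
  have "wt_cong (int N) ((1 - c) * poch_tr N (qv * c) * ipoch_tr N (qv * d))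
                        ((1 - d) * poch_tr N c * ipoch_tr N d)"
    by (rule poch_ratio_shift_cong[OF _ _ assms]) (simp_all add: c_def d_def wt_ge_monomial_simps)
  then show ?thesis
    unfolding shifted unfolding F by (simp add: c_def d_def ac_simps)
qed

lemma remap_qshift_y_factor: "i \<noteq> l \<Longrightarrow> remap (qshift l) (y_factor N i) = y_factor N i"
  by (simp add: y_factor_def qshift.remap_mult remap_qshift_poch_tr remap_qshift_ipoch_tr
      remap_qshift_vpow)
lemma pair_factors_qshift_cong:
  assumes "l \<in> {1..n}" "1 \<le> N"
  shows "wt_cong (int N)
    (remap (qshift l) (\<Prod>p\<in>off_diagonal n. pair_factor N p)
       * ((\<Prod>j\<in>{1..n} - {l}. 1 - qv * xx l * xinv j) * (\<Prod>i\<in>{1..n} - {l}. 1 - zv * xx i * xinv l * qinv)))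
    ((\<Prod>p\<in>off_diagonal n. pair_factor N p)
       * (\<Prod>j\<in>{1..n} - {l}. (1 - zv * xx l * xinv j) * (1 - xx j * xinv l)))"
proof -
  let ?A = "incident_factor l (\<lambda>j. 1 - qv * xx l * xinv j) (\<lambda>i. 1 - zv * xx i * xinv l * qinv)"
  let ?B = "incident_factor l (\<lambda>j. 1 - zv * xx l * xinv j) (\<lambda>i. 1 - xx i * xinv l)"
  have "wt_cong (int N) (\<Prod>p\<in>off_diagonal n. remap (qshift l) (pair_factor N p) * ?A p)
                        (\<Prod>p\<in>off_diagonal n. pair_factor N p * ?B p)"
  proof (rule wt_cong_prod[OF finite_off_diagonal])
    fix p
    assume "p \<in> off_diagonal n"
    then obtain i j where p: "p = (i, j)" and "i \<noteq> j"
      by auto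
    consider "i = l" | "j = l" | "i \<noteq> l" "j \<noteq> l"
      by blast
    then show "wt_cong (int N) (remap (qshift l) (pair_factor N p) * ?A p) (pair_factor N p * ?B p)"
      by cases (use \<open>i \<noteq> j\<close> pair_factor_qshift_cong_left[OF assms(2)]
          pair_factor_qshift_cong_right[OF assms(2)] in \<open>simp_all add: p incident_factor_def remap_qshift_pair_factor\<close>)
    show "wt_ge 0 (pair_factor N p * ?B p)"
      by (intro wt_ge_mult_nonneg wt_ge_pair_factor wt_ge_incident_factor wt_ge_diff wt_ge_one)
         (simp_all add: wt_ge_monomial_simps)
  qed simp
  then show ?thesis
    unfolding prod.distrib qshift.remap_prod prod_off_diagonal_incident_factor[OF assms(1)] .
qed

lemma y_factors_qshift_cong:
  assumes "l \<in> {1..n}" "1 \<le> N"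
  shows "wt_cong (int N) (remap (qshift l) (\<Prod>i\<in>{1..n}. y_factor N i) * (1 - tv * xx l * yv))
                         ((\<Prod>i\<in>{1..n}. y_factor N i) * (1 - tv * xx l * yv * zv))"
proof -
  let ?R = "\<Prod>i\<in>{1..n} - {l}. y_factor N i"
  have split: "(\<Prod>i\<in>{1..n}. y_factor N i) = y_factor N l * ?R"
    using assms(1) by (simp add: prod.remove)
  have unshifted: "remap (qshift l) ?R = ?R"
    by (simp add: qshift.remap_prod remap_qshift_y_factor)
  have "wt_cong (0 + int N) (?R * (remap (qshift l) (y_factor N l) * (1 - tv * xx l * yv)))
                            (?R * (y_factor N l * (1 - tv * xx l * yv * zv)))"
    by (intro wt_cong_mult_left wt_ge_prod wt_ge_y_factor y_factor_qshift_cong assms(2))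
  then show ?thesis
    unfolding split qshift.remap_mult unshifted by (simp add: ac_simps)
qed

text \<open>The shift sends x_l - x_j to -x_j (1 - q x_l/x_j) and x_i - x_l to x_i (1 - q x_l/x_i);
  the cofactor is the monomial in front.\<close>

definition vandermonde_cofactor :: "nat \<Rightarrow> nat \<times> nat \<Rightarrow> lpoly" where
  "vandermonde_cofactor l p =
     (if fst p = l then - xx (snd p) else if snd p = l then xx (fst p) else xx (fst p) - xx (snd p))"

lemma wt_ge_vandermonde_cofactor: "wt_ge 0 (vandermonde_cofactor l p)"
  by (simp add: vandermonde_cofactor_def wt_ge_minus wt_ge_diff wt_ge_vpow)

lemma remap_qshift_increasing_pair:
  assumes "fst p < snd p"
  shows "remap (qshift l) (xx (fst p) - xx (snd p))
       = vandermonde_cofactor l p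
           * incident_factor l (\<lambda>j. 1 - qv * xx l * xinv j) (\<lambda>j. 1 - qv * xx l * xinv j) p"
proof -
  obtain i j where p: "p = (i, j)" and "i < j"
    using assms by (cases p) auto
  consider "i = l" | "j = l" | "i \<noteq> l" "j \<noteq> l"
    by blast
  then show ?thesis
  proof cases
    case 1
    with \<open>i < j\<close> have "j \<noteq> l"
      by simp
    with 1 have "remap (qshift l) (xx i - xx j) = - (xx j - qv * xx l)"
      by (simp add: remap_diff remap_qshift_vpow ac_simps)
    also have "xx j - qv * xx l = xx j * (1 - qv * xx l * xinv j)"
      by (rule mult_one_minus_inverse[symmetric]) (rule vpow_mult_neg)
    finally show ?thesis
      using 1 \<open>j \<noteq> l\<close> by (simp add: p vandermonde_cofactor_def incident_factor_def)
  next
    case 2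
    with \<open>i < j\<close> have "i \<noteq> l"
      by simp
    with 2 have "remap (qshift l) (xx i - xx j) = xx i - qv * xx l"
      by (simp add: remap_diff remap_qshift_vpow ac_simps)
    also have "\<dots> = xx i * (1 - qv * xx l * xinv i)"
      by (rule mult_one_minus_inverse[symmetric]) (rule vpow_mult_neg)
    finally show ?thesis
      using 2 \<open>i \<noteq> l\<close> by (simp add: p vandermonde_cofactor_def incident_factor_def)
  next
    case 3
    then show ?thesis
      by (simp add: p vandermonde_cofactor_def incident_factor_def remap_diff remap_qshift_vpow)
  qed
qed

lemma remap_qshift_vandermonde:
  assumes "l \<in> {1..n}"
  shows "remap (qshift l) (vandermonde n)
       = (\<Prod>p\<in>increasing_pairs n. vandermonde_cofactor l p) * (\<Prod>j\<in>{1..n} - {l}. 1 - qv * xx l * xinv j)"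
proof -
  let ?C = "\<lambda>j. 1 - qv * xx l * xinv j"
  have "(\<Prod>p\<in>increasing_pairs n. remap (qshift l) (xx (fst p) - xx (snd p)))
      = (\<Prod>p\<in>increasing_pairs n. vandermonde_cofactor l p * incident_factor l ?C ?C p)"
    by (rule prod.cong[OF refl]) (auto intro: remap_qshift_increasing_pair)
  then show ?thesis
    by (simp only: qshift.remap_prod prod.distrib prod_increasing_pairs_incident_factor[OF assms])
qed

lemma vandermonde_cofactor_increasing_pair:
  assumes "fst p < snd p"
  shows "vandermonde_cofactor l p
           * incident_factor l (\<lambda>j. (1 - zv * xx l * xinv j) * (1 - xx j * xinv l))
                               (\<lambda>j. (1 - zv * xx l * xinv j) * (1 - xx j * xinv l)) p
       = (xx (fst p) - xx (snd p))
           * incident_factor l (\<lambda>j. zv - xx j * xinv l) (\<lambda>j. zv - xx j * xinv l) p"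
proof -
  have identity: "xx j * ((1 - zv * xx l * xinv j) * (1 - xx j * xinv l)) = (xx j - xx l) * (zv - xx j * xinv l)"
    for j
    by (rule vandermonde_pair_identity) (rule vpow_mult_neg)+
  obtain i j where p: "p = (i, j)" and "i < j"
    using assms by (cases p) auto
  consider "i = l" | "j = l" | "i \<noteq> l" "j \<noteq> l"
    by blast
  then show ?thesis
  proof cases
    case 1
    with \<open>i < j\<close> have "j \<noteq> l"
      by simp
    have "- xx j * ((1 - zv * xx l * xinv j) * (1 - xx j * xinv l)) = - ((xx j - xx l) * (zv - xx j * xinv l))"
      by (simp only: mult_minus_left identity)
    also have "\<dots> = (xx l - xx j) * (zv - xx j * xinv l)"
      by (simp add: algebra_simps)
    finally show ?thesis
      using 1 \<open>j \<noteq> l\<close> by (simp add: p vandermonde_cofactor_def incident_factor_def)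
  next
    case 2
    with \<open>i < j\<close> show ?thesis
      using identity[of i] by (simp add: p vandermonde_cofactor_def incident_factor_def)
  next
    case 3
    then show ?thesis
      by (simp add: p vandermonde_cofactor_def incident_factor_def)
  qed
qed

lemma vandermonde_cofactor_mult:
  assumes "l \<in> {1..n}"
  shows "(\<Prod>p\<in>increasing_pairs n. vandermonde_cofactor l p)
           * (\<Prod>j\<in>{1..n} - {l}. (1 - zv * xx l * xinv j) * (1 - xx j * xinv l))
       = vandermonde n * (\<Prod>j\<in>{1..n} - {l}. zv - xx j * xinv l)"
proof -
  let ?M = "\<lambda>j. (1 - zv * xx l * xinv j) * (1 - xx j * xinv l)"
  let ?E = "\<lambda>j. zv - xx j * xinv l"
  have "(\<Prod>p\<in>increasing_pairs n. vandermonde_cofactor l p * incident_factor l ?M ?M p)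
      = (\<Prod>p\<in>increasing_pairs n. (xx (fst p) - xx (snd p)) * incident_factor l ?E ?E p)"
    by (rule prod.cong[OF refl]) (auto intro: vandermonde_cofactor_increasing_pair)
  then show ?thesis
    by (simp only: prod.distrib prod_increasing_pairs_incident_factor[OF assms])
qed

definition qdiff_lhs :: "nat \<Rightarrow> nat \<Rightarrow> lpoly" where
  "qdiff_lhs n l = (1 - tv * xx l * yv) * (\<Prod>i\<in>{1..n} - {l}. 1 - zv * xx i * xinv l * qinv)"

definition qdiff_rhs :: "nat \<Rightarrow> nat \<Rightarrow> lpoly" where
  "qdiff_rhs n l = (1 - tv * xx l * yv * zv) * (\<Prod>i\<in>{1..n} - {l}. zv - xx i * xinv l)"

lemma h_tr_qshift_cong:
  assumes "l \<in> {1..n}" "1 \<le> N"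
  shows "wt_cong (int N) (remap (qshift l) (h_tr n k N) * (vpow T (2 * k) * qdiff_lhs n l))
                         (h_tr n k N * qdiff_rhs n l)"
proof -
  let ?S = "{1..n} - {l}"
  let ?X = "x_monomial n (\<lambda>_. - k)"
  let ?PP = "\<Prod>p\<in>off_diagonal n. pair_factor N p"
  let ?YY = "\<Prod>i\<in>{1..n}. y_factor N i"
  let ?W = "\<Prod>p\<in>increasing_pairs n. vandermonde_cofactor l p"
  let ?M = "\<Prod>j\<in>?S. (1 - zv * xx l * xinv j) * (1 - xx j * xinv l)"
  let ?L = "(remap (qshift l) ?PP
              * ((\<Prod>j\<in>?S. 1 - qv * xx l * xinv j) * (\<Prod>i\<in>?S. 1 - zv * xx i * xinv l * qinv)))
            * (remap (qshift l) ?YY * (1 - tv * xx l * yv))"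
  let ?R = "(?PP * ?M) * (?YY * (1 - tv * xx l * yv * zv))"
  have "remap (qshift l) (h_tr n k N) * (vpow T (2 * k) * qdiff_lhs n l)
      = (vpow T (- (2 * k)) * vpow T (2 * k)) * (?X * ?W * ?L)"
    unfolding h_tr_factors qshift.remap_mult remap_qshift_x_monomial[OF assms(1)]
      remap_qshift_vandermonde[OF assms(1)] qdiff_lhs_def mult_minus_right
    by (simp only: ac_simps)
  also have "\<dots> = ?X * ?W * ?L"
    by (simp add: vpow_mult)
  finally have lhs: "remap (qshift l) (h_tr n k N) * (vpow T (2 * k) * qdiff_lhs n l) = ?X * ?W * ?L" .
  have "?X * ?W * ?R = ?X * (?W * ?M) * ?PP * ?YY * (1 - tv * xx l * yv * zv)"
    by (simp only: ac_simps)
  also have "\<dots> = h_tr n k N * qdiff_rhs n l"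
    unfolding vandermonde_cofactor_mult[OF assms(1)] h_tr_factors qdiff_rhs_def
    by (simp only: ac_simps)
  finally have rhs: "?X * ?W * ?R = h_tr n k N * qdiff_rhs n l" .
  have "wt_ge (0 + 0) (?X * ?W)"
    by (intro wt_ge_mult wt_ge_x_monomial wt_ge_prod wt_ge_vandermonde_cofactor)
  moreover have "wt_cong (int N) ?L ?R"
    by (rule wt_cong_mult[OF pair_factors_qshift_cong[OF assms] y_factors_qshift_cong[OF assms]])
       (auto intro!: wt_ge_mult_nonneg wt_ge_prod wt_ge_pair_factor wt_ge_y_factor wt_ge_diff wt_ge_one
         simp: wt_ge_monomial_simps)
  ultimately have "wt_cong (int N) (?X * ?W * ?L) (?X * ?W * ?R)"
    using wt_cong_mult_left by fastforce
  then show ?thesis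
    by (simp only: lhs rhs)
qed

lemma h_qshift:
  assumes "l \<in> {1..n}"
  shows "lmul (vpow T (2 * k) * qdiff_lhs n l) (\<lambda>\<nu>. h n k (qshift_inv l \<nu>)) = lmul (qdiff_rhs n l) (h n k)"
proof
  fix \<mu>
  let ?A = "vpow T (2 * k) * qdiff_lhs n l"
  let ?B = "qdiff_rhs n l"
  let ?needed = "qshift_inv l ` (\<lambda>\<nu>. \<mu> - \<nu>) ` Poly_Mapping.keys ?A
                 \<union> (\<lambda>\<nu>. \<mu> - \<nu>) ` Poly_Mapping.keys ?B"
  have "finite ?needed"
    by simp
  then obtain N0 where N0: "\<forall>N\<ge>N0. \<forall>\<nu>\<in>?needed. h n k \<nu> = Poly_Mapping.lookup (h_tr n k N) \<nu>"
    using eventually_h_eq_h_tr unfolding eventually_sequentially by meson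
  define N where "N = max N0 (nat (wt \<mu>) + 1)"
  have N: "1 \<le> N" "wt \<mu> < int N"
    unfolding N_def by linarith+
  have shifted: "h n k (qshift_inv l (\<mu> - \<nu>)) = Poly_Mapping.lookup (h_tr n k N) (qshift_inv l (\<mu> - \<nu>))"
    if "\<nu> \<in> Poly_Mapping.keys ?A" for \<nu>
    using N0 that by (simp add: N_def)
  have plain: "h n k (\<mu> - \<nu>) = Poly_Mapping.lookup (h_tr n k N) (\<mu> - \<nu>)"
    if "\<nu> \<in> Poly_Mapping.keys ?B" for \<nu>
    using N0 that by (simp add: N_def)
  have "lmul ?A (\<lambda>\<nu>. h n k (qshift_inv l \<nu>)) \<mu>
      = lmul ?A (Poly_Mapping.lookup (remap (qshift l) (h_tr n k N))) \<mu>"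
    unfolding lmul_def by (intro sum.cong refl) (simp add: shifted lookup_remap[where g = "qshift_inv l"])
  also have "\<dots> = Poly_Mapping.lookup (remap (qshift l) (h_tr n k N) * ?A) \<mu>"
    by (simp add: lmul_lookup mult.commute)
  also have "\<dots> = Poly_Mapping.lookup (h_tr n k N * ?B) \<mu>"
    by (rule wt_cong_lookup[OF h_tr_qshift_cong[OF assms N(1)] N(2)])
  also have "\<dots> = lmul ?B (Poly_Mapping.lookup (h_tr n k N)) \<mu>"
    by (simp add: lmul_lookup mult.commute)
  also have "\<dots> = lmul ?B (h n k) \<mu>"
    unfolding lmul_def by (intro sum.cong refl) (simp add: plain)
  finally show "lmul ?A (\<lambda>\<nu>. h n k (qshift_inv l \<nu>)) \<mu> = lmul ?B (h n k) \<mu>" .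
qed


section \<open>Coefficients as constant terms\<close>

definition xrefl :: "mono \<Rightarrow> mono" where
  "xrefl \<nu> = \<nu> - xpart \<nu> - xpart \<nu>"

lemma lookup_xrefl:
  "Poly_Mapping.lookup (xrefl \<nu>) v = (if is_xvar v then - Poly_Mapping.lookup \<nu> v else Poly_Mapping.lookup \<nu> v)"
  by (simp add: xrefl_def xpart_def lookup_minus lookup_mapp when_def in_keys_iff)

interpretation xrefl: mono_additive xrefl
  by standard (rule poly_mapping_eqI, simp add: lookup_xrefl lookup_add)

lemma xrefl_xrefl [simp]: "xrefl (xrefl \<nu>) = \<nu>"
  by (rule poly_mapping_eqI) (simp add: lookup_xrefl)

lemma remap_xrefl_vpow: "remap xrefl (vpow v e) = (if is_xvar v then vpow v (- e) else vpow v e)"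
proof -
  have "xrefl (Poly_Mapping.single v e) = Poly_Mapping.single v (if is_xvar v then - e else e)"
    by (rule poly_mapping_eqI) (simp add: lookup_xrefl lookup_single when_def)
  then show ?thesis
    by (simp add: vpow_def remap_mon)
qed

lemma remap_xrefl_x_monomial: "remap xrefl (x_monomial n e) = x_monomial n (\<lambda>i. - e i)"
  by (simp add: xrefl.remap_prod remap_xrefl_vpow is_xvar_def)

lemma bracket_eq_lmul:
  "bracket P F \<mu> = (if \<forall>i. Poly_Mapping.lookup \<mu> (X i) = 0 then lmul (remap xrefl P) F \<mu> else 0)"
proof -
  have "lmul (remap xrefl P) F \<mu> = (\<Sum>\<nu>\<in>Poly_Mapping.keys P. Poly_Mapping.lookup P \<nu> * F (\<mu> - xrefl \<nu>))"
    by (rule lmul_remap[where g = xrefl]) simp_all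
  moreover have "\<mu> - xrefl \<nu> = \<mu> - (\<nu> - xpart \<nu>) + xpart \<nu>" for \<nu>
    by (simp add: xrefl_def algebra_simps)
  ultimately show ?thesis
    by (simp add: bracket_def)
qed

lemma lmul_vpow_bracket:
  assumes "\<not> is_xvar v"
  shows "lmul (vpow v e) (bracket P F) \<mu>
       = (if \<forall>i. Poly_Mapping.lookup \<mu> (X i) = 0 then lmul (vpow v e * remap xrefl P) F \<mu> else 0)"
proof -
  have "Poly_Mapping.lookup (\<mu> - Poly_Mapping.single v e) (X i) = Poly_Mapping.lookup \<mu> (X i)" for i
    using assms by (cases v) (simp_all add: lookup_minus lookup_single is_xvar_def)
  then show ?thesis
    by (simp add: lmul_vpow bracket_eq_lmul lmul_mult)
qed

lemma qshift_reflected_lhs: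
  assumes "l \<in> {1..n}"
  shows "remap (qshift l) (vpow T (2 * (\<beta> l + k))
           * remap xrefl (x_monomial n \<beta> * (1 - vpow T (-1) * yv * xinv l)
                          * (\<Prod>i\<in>{1..n} - {l}. 1 - zv * xx l * xinv i)))
       = x_monomial n (\<lambda>i. - \<beta> i) * (vpow T (2 * k) * qdiff_lhs n l)"
proof -
  let ?c = "vpow T (2 * (\<beta> l + k))"
  let ?X = "x_monomial n (\<lambda>i. - \<beta> i)"
  let ?S = "{1..n} - {l}"
  let ?P = "\<Prod>i\<in>?S. 1 - zv * xinv l * xx i"
  have reflected: "remap xrefl (x_monomial n \<beta> * (1 - vpow T (-1) * yv * xinv l)
                      * (\<Prod>i\<in>?S. 1 - zv * xx l * xinv i))
      = ?X * (1 - vpow T (-1) * yv * xx l) * ?P"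
    by (simp add: xrefl.remap_mult remap_diff xrefl.remap_one remap_xrefl_x_monomial xrefl.remap_prod
        remap_xrefl_vpow is_xvar_def)
  have shift_c: "remap (qshift l) ?c = ?c"
    by (simp add: remap_qshift_vpow)
  have shift_y: "remap (qshift l) (1 - vpow T (-1) * yv * xx l) = 1 - tv * xx l * yv"
  proof -
    have "remap (qshift l) (1 - vpow T (-1) * yv * xx l) = 1 - (vpow T (-1) * vpow T 2) * xx l * yv"
      by (simp add: qshift.remap_mult remap_diff qshift.remap_one remap_qshift_vpow ac_simps)
    then show ?thesis
      by (simp add: vpow_mult)
  qed
  have shift_P: "remap (qshift l) ?P = (\<Prod>i\<in>?S. 1 - zv * xx i * xinv l * qinv)"
    unfolding qshift.remap_prod
    by (rule prod.cong[OF refl]) (auto simp: qshift.remap_mult remap_diff qshift.remap_one remap_qshift_vpow ac_simps)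
  have cancel: "?c * vpow T (2 * - \<beta> l) = vpow T (2 * k)"
    by (simp add: vpow_mult algebra_simps)
  have "remap (qshift l) (?c * remap xrefl (x_monomial n \<beta> * (1 - vpow T (-1) * yv * xinv l)
                          * (\<Prod>i\<in>?S. 1 - zv * xx l * xinv i)))
      = remap (qshift l) ?c * (remap (qshift l) ?X * (remap (qshift l) (1 - vpow T (-1) * yv * xx l)
          * remap (qshift l) ?P))"
    unfolding reflected by (simp only: qshift.remap_mult mult.assoc)
  also have "\<dots> = ?c * (?X * vpow T (2 * - \<beta> l)
                       * ((1 - tv * xx l * yv) * (\<Prod>i\<in>?S. 1 - zv * xx i * xinv l * qinv)))"
    by (simp only: shift_c remap_qshift_x_monomial[OF assms] shift_y shift_P)
  also have "\<dots> = ?X * ((?c * vpow T (2 * - \<beta> l)) * qdiff_lhs n l)"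
    by (simp only: qdiff_lhs_def ac_simps)
  finally show ?thesis
    by (simp only: cancel)
qed

lemma reflected_rhs:
  assumes "l \<in> {1..n}"
  shows "vpow Z (int n - 1)
           * remap xrefl (x_monomial n \<beta> * (1 - tv * zv * yv * xinv l)
                          * (\<Prod>i\<in>{1..n} - {l}. 1 - vpow Z (-1) * xx l * xinv i))
       = x_monomial n (\<lambda>i. - \<beta> i) * qdiff_rhs n l"
proof -
  let ?X = "x_monomial n (\<lambda>i. - \<beta> i)"
  let ?S = "{1..n} - {l}"
  let ?P = "\<Prod>i\<in>?S. 1 - vpow Z (-1) * xinv l * xx i"
  have reflected: "remap xrefl (x_monomial n \<beta> * (1 - tv * zv * yv * xinv l)
                      * (\<Prod>i\<in>?S. 1 - vpow Z (-1) * xx l * xinv i))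
      = ?X * (1 - tv * zv * yv * xx l) * ?P"
    by (simp add: xrefl.remap_mult remap_diff xrefl.remap_one remap_xrefl_x_monomial xrefl.remap_prod
        remap_xrefl_vpow is_xvar_def)
  have z_power: "vpow Z (int n - 1) = (\<Prod>i\<in>?S. zv)"
    using assms by (simp add: vpow_power of_nat_diff)
  have "zv * (1 - vpow Z (-1) * xinv l * xx i) = zv - xx i * xinv l" for i
  proof -
    have "zv * (1 - vpow Z (-1) * xinv l * xx i) = zv * (1 - (xx i * xinv l) * vpow Z (-1))"
      by (simp only: ac_simps)
    also have "\<dots> = zv - xx i * xinv l"
      by (rule mult_one_minus_inverse) (rule vpow_mult_neg)
    finally show ?thesis .
  qed
  then have absorb: "(\<Prod>i\<in>?S. zv) * ?P = (\<Prod>i\<in>?S. zv - xx i * xinv l)"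
    by (simp only: prod.distrib [symmetric])
  have "vpow Z (int n - 1) * (?X * (1 - tv * zv * yv * xx l) * ?P)
      = ?X * (1 - tv * zv * yv * xx l) * ((\<Prod>i\<in>?S. zv) * ?P)"
    by (simp only: z_power ac_simps)
  also have "\<dots> = ?X * qdiff_rhs n l"
    unfolding absorb qdiff_rhs_def by (simp only: ac_simps)
  finally show ?thesis
    by (simp only: reflected)
qed


theorem lemma3p7:
  fixes n :: nat and k :: int and \<beta> :: "nat \<Rightarrow> int" and l :: nat
  assumes "n \<ge> 2" and "1 \<le> l" and "l \<le> n"
  shows "lmul (vpow T (2 * (\<beta> l + k)))
           (bracket ((\<Prod>i\<in>{1..n}. vpow (X i) (\<beta> i))
                     * (1 - vpow T (-1) * yv * xinv l)
                     * (\<Prod>i\<in>{1..n} - {l}. 1 - zv * xx l * xinv i))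
                    (h n k))
       = lmul (vpow Z (int n - 1))
           (bracket ((\<Prod>i\<in>{1..n}. vpow (X i) (\<beta> i))
                     * (1 - tv * zv * yv * xinv l)
                     * (\<Prod>i\<in>{1..n} - {l}. 1 - vpow Z (-1) * xx l * xinv i))
                    (h n k))"
  (is "lmul ?c (bracket ?PL _) = lmul ?z (bracket ?PR _)")
proof
  fix \<mu>
  have l: "l \<in> {1..n}"
    using assms by simp
  show "lmul ?c (bracket ?PL (h n k)) \<mu> = lmul ?z (bracket ?PR (h n k)) \<mu>"
  proof (cases "\<forall>i. Poly_Mapping.lookup \<mu> (X i) = 0")
    case True
    have "lmul ?c (bracket ?PL (h n k)) \<mu>
        = lmul (remap (qshift l) (?c * remap xrefl ?PL)) (\<lambda>\<nu>. h n k (qshift_inv l \<nu>)) \<mu>"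
      using True by (simp add: lmul_vpow_bracket is_xvar_def flip: lmul_qshift)
    also have "\<dots> = lmul (x_monomial n (\<lambda>i. - \<beta> i)) (lmul (qdiff_rhs n l) (h n k)) \<mu>"
      by (simp only: qshift_reflected_lhs[OF l] lmul_mult[of "x_monomial n (\<lambda>i. - \<beta> i)"] h_qshift[OF l])
    also have "\<dots> = lmul (?z * remap xrefl ?PR) (h n k) \<mu>"
      by (simp only: lmul_mult [symmetric] reflected_rhs[OF l])
    also have "\<dots> = lmul ?z (bracket ?PR (h n k)) \<mu>"
      using True by (simp add: lmul_vpow_bracket is_xvar_def)
    finally show ?thesis .
  qed (auto simp: lmul_vpow_bracket is_xvar_def)
qed

end
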